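(* Let $\{x^k\}$ be generated by the MPG algorithm described in the context, and suppose that for each $j=1,\ldots,m$ the gradient $\nabla G_j$ is Lipschitz continuous with constant $L_j>0$. Then for every $k$ at which the step size $t_k$ is computed, $t_k\ge t_{\min}:=\min\{1,\tau_1\gamma/L_{\max}\}$, where $L_{\max}:=\max_{j=1,\ldots,m}L_j$.
   Context: Let $F:\mathbb{R}^n\to(\mathbb{R}\cup\{+\infty\})^m$, $F=(F_1,\ldots,F_m)$, with $F_j=G_j+H_j$ for $j=1,\ldots,m$, where: (i) each $G_j:\mathbb{R}^n\to\mathbb{R}$ is continuously differentiable and convex; (ii) each $H_j:\mathbb{R}^n\to\mathbb{R}\cup\{+\infty\}$ is proper, convex and continuous on its domain; (iii) $\mathrm{dom}(F):=\{x: F_j(x)<+\infty\ \forall j\}$ is nonempty and closed. For $u,v\in\mathbb{R}^m$, $u\preceq v$ means $u_j\le v_j$ for all $j$. For $x\in\mathrm{dom}(F)$ and $\alpha>0$ define $\psi_x(u):=\max_{j=1,\ldots,m}\big(\nabla G_j(x)^\top(u-x)+H_j(u)-H_j(x)\big)$, $p_\alpha(x):=\arg\min_{u\in\mathbb{R}^n}\psi_x(u)+\frac{1}{2\alpha}\|u-x\|^2$ (unique minimizer), and $\theta_\alpha(x):=\psi_x(p_\alpha(x))+\frac{1}{2\alpha}\|p_\alpha(x)-x\|^2$. MPG algorithm. Step 0: choose $x^0\in\mathrm{dom}(F)$, $\alpha>0$, $\gamma\in(0,2/\alpha)$, $0<\tau_1<\tau_2<1$; set $k=0$. Step 1: compute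 $p^k:=p_\alpha(x^k)$ and $\theta_\alpha(x^k)$. Step 2: if $\theta_\alpha(x^k)=0$, stop. Step 3: set $d^k:=p^k-x^k$, take $j_k^*\in\arg\max_{j}\nabla G_j(x^k)^\top d^k$, set $t=1$. Step 3.1: if $G_{j_k^*}(x^k+td^k)\le G_{j_k^*}(x^k)+t\nabla G_{j_k^*}(x^k)^\top d^k+t\frac{\gamma}{2}\|d^k\|^2$, go to Step 3.2; otherwise replace $t$ by some value in $[\tau_1 t,\tau_2 t]$ and repeat Step 3.1. Step 3.2: if $F(x^k+td^k)\preceq F(x^k)$, set $t_k=t$ and go to Step 4. Step 3.3: replace $t$ by some value in $[\tau_1 t,\tau_2 t]$; if $G_j(x^k+td^k)\le G_j(x^k)+t\nabla G_j(x^k)^\top d^k+t\frac{\gamma}{2}\|d^k\|^2$ for all $j=1,\ldots,m$, set $t_k=t$ and go to Step 4; otherwise repeat Step 3.3. Step 4: $x^{k+1}:=x^k+t_kd^k$, $k\leftarrow k+1$, go to Step 1. *)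

theory Defs
  imports "HOL-Analysis.Analysis" "HOL-Library.Extended_Real"
begin

text \<open>Extended-valued functions R^n -> R \<union> {+\<infinity>} are modelled as functions into ereal
  that never take the value -\<infinity>.\<close>

definition ext_convex :: "('a::real_vector \<Rightarrow> ereal) \<Rightarrow> bool" where
  "ext_convex h \<longleftrightarrow> (\<forall>x y (l::real). 0 < l \<and> l < 1 \<longrightarrow>
      h (l *\<^sub>R x + (1 - l) *\<^sub>R y) \<le> ereal l * h x + ereal (1 - l) * h y)"

definition ext_proper :: "('a \<Rightarrow> ereal) \<Rightarrow> bool" where
  "ext_proper h \<longleftrightarrow> (\<exists>x. h x \<noteq> \<infinity>) \<and> (\<forall>x. h x \<noteq> -\<infinity>)"

definition edom :: "('a \<Rightarrow> ereal) \<Rightarrow> 'a set" where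
  "edom h = {x. h x < \<infinity>}"

definition Fval :: "(nat \<Rightarrow> 'a \<Rightarrow> real) \<Rightarrow> (nat \<Rightarrow> 'a \<Rightarrow> ereal) \<Rightarrow> nat \<Rightarrow> 'a \<Rightarrow> ereal" where
  "Fval G H j x = ereal (G j x) + H j x"

definition domF :: "nat \<Rightarrow> (nat \<Rightarrow> 'a \<Rightarrow> real) \<Rightarrow> (nat \<Rightarrow> 'a \<Rightarrow> ereal) \<Rightarrow> 'a set" where
  "domF m G H = {x. \<forall>j\<in>{1..m}. Fval G H j x < \<infinity>}"

definition F_le :: "nat \<Rightarrow> (nat \<Rightarrow> 'a \<Rightarrow> real) \<Rightarrow> (nat \<Rightarrow> 'a \<Rightarrow> ereal) \<Rightarrow> 'a \<Rightarrow> 'a \<Rightarrow> bool" where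
  "F_le m G H y x \<longleftrightarrow> (\<forall>j\<in>{1..m}. Fval G H j y \<le> Fval G H j x)"

definition psi :: "nat \<Rightarrow> (nat \<Rightarrow> 'a::real_inner \<Rightarrow> 'a) \<Rightarrow> (nat \<Rightarrow> 'a \<Rightarrow> ereal) \<Rightarrow> 'a \<Rightarrow> 'a \<Rightarrow> ereal" where
  "psi m gradG H x u = Max ((\<lambda>j. ereal (gradG j x \<bullet> (u - x)) + H j u - H j x) ` {1..m})"

definition prox_obj :: "nat \<Rightarrow> (nat \<Rightarrow> 'a::real_inner \<Rightarrow> 'a) \<Rightarrow> (nat \<Rightarrow> 'a \<Rightarrow> ereal) \<Rightarrow> real \<Rightarrow> 'a \<Rightarrow> 'a \<Rightarrow> ereal" where
  "prox_obj m gradG H \<alpha> x u = psi m gradG H x u + ereal (1 / (2 * \<alpha>) * (norm (u - x))\<^sup>2)"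

definition p_alpha :: "nat \<Rightarrow> (nat \<Rightarrow> 'a::real_inner \<Rightarrow> 'a) \<Rightarrow> (nat \<Rightarrow> 'a \<Rightarrow> ereal) \<Rightarrow> real \<Rightarrow> 'a \<Rightarrow> 'a" where
  "p_alpha m gradG H \<alpha> x = (THE u. \<forall>v. prox_obj m gradG H \<alpha> x u \<le> prox_obj m gradG H \<alpha> x v)"

definition theta_alpha :: "nat \<Rightarrow> (nat \<Rightarrow> 'a::real_inner \<Rightarrow> 'a) \<Rightarrow> (nat \<Rightarrow> 'a \<Rightarrow> ereal) \<Rightarrow> real \<Rightarrow> 'a \<Rightarrow> ereal" where
  "theta_alpha m gradG H \<alpha> x = prox_obj m gradG H \<alpha> x (p_alpha m gradG H \<alpha> x)"

definition descent_test :: "(nat \<Rightarrow> 'a::real_inner \<Rightarrow> real) \<Rightarrow> (nat \<Rightarrow> 'a \<Rightarrow> 'a) \<Rightarrow> real \<Rightarrow> nat \<Rightarrow> 'a \<Rightarrow> 'a \<Rightarrow> real \<Rightarrow> bool" where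
  "descent_test G gradG \<gamma> j x d t \<longleftrightarrow>
     G j (x + t *\<^sub>R d) \<le> G j x + t * (gradG j x \<bullet> d) + t * (\<gamma> / 2) * (norm d)\<^sup>2"

text \<open>Backtracking loop: "if P t, stop with t; otherwise replace t by some value in
  [tau1 t, tau2 t] and repeat".  backtrack P tau1 tau2 t s means: starting the loop at the
  trial value t, some terminating run of the loop ends with the value s.\<close>
inductive backtrack :: "(real \<Rightarrow> bool) \<Rightarrow> real \<Rightarrow> real \<Rightarrow> real \<Rightarrow> real \<Rightarrow> bool"
  for P :: "real \<Rightarrow> bool" and \<tau>1 \<tau>2 :: real where
  stop: "P t \<Longrightarrow> backtrack P \<tau>1 \<tau>2 t t"
| shrink: "\<not> P t \<Longrightarrow> \<tau>1 * t \<le> t' \<Longrightarrow> t' \<le> \<tau>2 * t \<Longrightarrow> backtrack P \<tau>1 \<tau>2 t' s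
            \<Longrightarrow> backtrack P \<tau>1 \<tau>2 t s"

text \<open>Step 3 of MPG at the current iterate x: tk is a step size that some run of
  Step 3 (with some admissible choice of j_k^* and of the reduced trial values) returns.\<close>
definition mpg_step3 :: "nat \<Rightarrow> (nat \<Rightarrow> 'a::real_inner \<Rightarrow> real) \<Rightarrow> (nat \<Rightarrow> 'a \<Rightarrow> 'a) \<Rightarrow>
    (nat \<Rightarrow> 'a \<Rightarrow> ereal) \<Rightarrow> real \<Rightarrow> real \<Rightarrow> real \<Rightarrow> real \<Rightarrow> 'a \<Rightarrow> real \<Rightarrow> bool" where
  "mpg_step3 m G gradG H \<alpha> \<gamma> \<tau>1 \<tau>2 x tk \<longleftrightarrow>
    (let d = p_alpha m gradG H \<alpha> x - x in
     \<exists>js\<in>{1..m}. (\<forall>j\<in>{1..m}. gradG j x \<bullet> d \<le> gradG js x \<bullet> d) \<and>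
       (\<exists>s. backtrack (descent_test G gradG \<gamma> js x d) \<tau>1 \<tau>2 1 s \<and>
          ((F_le m G H (x + s *\<^sub>R d) x \<and> tk = s) \<or>
           (\<not> F_le m G H (x + s *\<^sub>R d) x \<and>
            (\<exists>t'. \<tau>1 * s \<le> t' \<and> t' \<le> \<tau>2 * s \<and>
               backtrack (\<lambda>t. \<forall>j\<in>{1..m}. descent_test G gradG \<gamma> j x d t) \<tau>1 \<tau>2 t' tk)))))"

end

theory Submission
  imports Defs
begin

(*
  By the descent lemma for L_j-Lipschitz gradients, every descent test on G_j holds for all
  steps r with 0 < r <= c := gamma / L_max. A backtracking run started at t therefore stops at
  a step >= min t (tau1 * c): it only shrinks trial values t > c, each time to at least tau1 * t.
  This settles Step 3.1. Step 3.3 starts from some t' >= tau1 * s, so it suffices that Step 3.2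
  only rejects steps s > c. Indeed, if s <= c then all m descent tests hold at s, and F
  decreases along d = p - x: the prox point p = p_alpha(x) of the convex function psi_x
  satisfies psi_x(p) + |p - x|^2 / alpha <= psi_x(x) = 0 by strong convexity of the prox
  objective, and gamma / 2 < 1 / alpha. The iterates stay in dom F, on which all this
  reasoning takes place, since x^(k+1) lies on the segment between x^k and p^k.
*)

lemma lipschitz_grad_upper_bound:
  fixes G :: "'a::real_inner \<Rightarrow> real"
  assumes grad: "\<And>y. (G has_derivative (\<lambda>h. g y \<bullet> h)) (at y)"
    and lip: "\<And>y z. norm (g y - g z) \<le> L * norm (y - z)"
    and "0 \<le> t"
  shows "G (x + t *\<^sub>R d) \<le> G x + t * (g x \<bullet> d) + L * t\<^sup>2 / 2 * (norm d)\<^sup>2"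
proof -
  define h where "h s = G (x + s *\<^sub>R d) - G x - s * (g x \<bullet> d) - L * s\<^sup>2 / 2 * (norm d)\<^sup>2" for s
  have h_deriv: "(h has_real_derivative ((g (x + s *\<^sub>R d) - g x) \<bullet> d - L * s * (norm d)\<^sup>2)) (at s)" for s
  proof -
    have "((\<lambda>s. x + s *\<^sub>R d) has_derivative (\<lambda>r. r *\<^sub>R d)) (at s)"
      by (auto intro!: derivative_eq_intros)
    from has_derivative_compose[OF this grad]
    have "((\<lambda>s. G (x + s *\<^sub>R d)) has_real_derivative (g (x + s *\<^sub>R d) \<bullet> d)) (at s)"
      by (simp add: has_real_derivative_iff_has_vector_derivative has_vector_derivative_def mult.commute)
    then show ?thesis unfolding h_def
      by (auto intro!: derivative_eq_intros simp: inner_diff_left power2_eq_square algebra_simps)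
  qed
  have "h t \<le> h 0"
  proof (rule DERIV_nonpos_imp_nonincreasing[OF \<open>0 \<le> t\<close>])
    fix s assume s: "0 \<le> s" "s \<le> t"
    have "(g (x + s *\<^sub>R d) - g x) \<bullet> d \<le> norm (g (x + s *\<^sub>R d) - g x) * norm d"
      by (rule norm_cauchy_schwarz)
    also have "\<dots> \<le> L * norm (s *\<^sub>R d) * norm d"
      using lip[of "x + s *\<^sub>R d" x] by (simp add: mult_right_mono)
    also have "\<dots> = L * s * (norm d)\<^sup>2" using s by (simp add: power2_eq_square)
    finally show "\<exists>y. (h has_real_derivative y) (at s) \<and> y \<le> 0" using h_deriv by fastforce
  qed
  then show ?thesis unfolding h_def by simp
qed

lemma convex_on_Max:
  assumes "finite A" "A \<noteq> {}" "\<And>j. j \<in> A \<Longrightarrow> convex_on S (f j)"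
  shows "convex_on S (\<lambda>u. Max ((\<lambda>j. f j u) ` A))"
proof -
  have "convex S" using assms(2,3) convex_on_imp_convex by blast
  moreover have "Max ((\<lambda>j. f j (a *\<^sub>R x + b *\<^sub>R y)) ` A)
      \<le> a * Max ((\<lambda>j. f j x) ` A) + b * Max ((\<lambda>j. f j y) ` A)"
    if "x \<in> S" "y \<in> S" "0 \<le> a" "0 \<le> b" "a + b = 1" for x y a b
  proof (rule Max.boundedI)
    fix z assume "z \<in> (\<lambda>j. f j (a *\<^sub>R x + b *\<^sub>R y)) ` A"
    then obtain j where j: "j \<in> A" and z: "z = f j (a *\<^sub>R x + b *\<^sub>R y)" by blast
    have "z \<le> a * f j x + b * f j y"
      using assms(3)[OF j] that unfolding z convex_on_def by blast
    also have "\<dots> \<le> a * Max ((\<lambda>j. f j x) ` A) + b * Max ((\<lambda>j. f j y) ` A)"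
      using j assms(1) that(3,4) by (intro add_mono mult_left_mono) auto
    finally show "z \<le> a * Max ((\<lambda>j. f j x) ` A) + b * Max ((\<lambda>j. f j y) ` A)" .
  qed (use assms in auto)
  ultimately show ?thesis unfolding convex_on_def by blast
qed

lemma continuous_on_Max:
  fixes f :: "'i \<Rightarrow> 'a::topological_space \<Rightarrow> real"
  assumes "finite A" "A \<noteq> {}" "\<And>j. j \<in> A \<Longrightarrow> continuous_on S (f j)"
  shows "continuous_on S (\<lambda>u. Max ((\<lambda>j. f j u) ` A))"
  using assms
proof (induction A rule: finite_ne_induct)
  case (singleton j)
  then show ?case by simp
next
  case (insert j A)
  then have "continuous_on S (\<lambda>u. max (f j u) (Max ((\<lambda>j. f j u) ` A)))"
    by (intro continuous_on_max) auto
  then show ?case using insert by simp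
qed

section \<open>Proximal points of convex functions\<close>

lemma convex_on_linear_lower_bound:
  fixes f :: "'a::real_normed_vector \<Rightarrow> real"
  assumes f: "convex_on D f" and "x \<in> D" "u \<in> D" "1 \<le> dist x u"
    and B: "\<And>w. w \<in> D \<Longrightarrow> dist x w \<le> 1 \<Longrightarrow> \<bar>f w\<bar> \<le> B"
  shows "f x - 2 * B * dist x u \<le> f u"
proof -
  define r where "r = dist x u"
  define w where "w = (1 - 1 / r) *\<^sub>R x + (1 / r) *\<^sub>R u"
  have r: "1 \<le> r" using assms(4) r_def by simp
  have "w \<in> D"
    using convex_on_imp_convex[OF f] \<open>x \<in> D\<close> \<open>u \<in> D\<close> r unfolding w_def
    by (intro convexD) auto
  have "w - x = (1 / r) *\<^sub>R (u - x)" unfolding w_def by (simp add: algebra_simps)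
  moreover have "u \<noteq> x" using r r_def by auto
  ultimately have "dist x w = 1" by (simp add: r_def dist_norm norm_minus_commute)
  have fw: "f w \<le> (1 - 1 / r) * f x + (1 / r) * f u"
    unfolding w_def using r \<open>x \<in> D\<close> \<open>u \<in> D\<close> by (intro convex_onD[OF f]) auto
  have "f x - 2 * B \<le> f w"
    using B[OF \<open>w \<in> D\<close>] B[OF \<open>x \<in> D\<close>] \<open>dist x w = 1\<close> by (simp add: abs_le_iff)
  then have "r * (f x - 2 * B) \<le> r * f w" using r by simp
  also have "\<dots> \<le> (r - 1) * f x + f u" using fw r by (simp add: field_simps)
  finally show ?thesis unfolding r_def[symmetric] by (simp add: algebra_simps)
qed

lemma continuous_attains_inf_coercive:
  fixes \<phi> :: "'a::heine_borel \<Rightarrow> real"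
  assumes "closed D" "continuous_on D \<phi>" "x \<in> D"
    and far: "\<And>u. u \<in> D \<Longrightarrow> R < dist x u \<Longrightarrow> \<phi> x < \<phi> u"
  shows "\<exists>p\<in>D. \<forall>u\<in>D. \<phi> p \<le> \<phi> u"
proof -
  define K where "K = D \<inter> cball x R"
  have "x \<in> K" using far[OF \<open>x \<in> D\<close>] \<open>x \<in> D\<close> unfolding K_def by force
  moreover have "compact K" unfolding K_def using \<open>closed D\<close> by (intro closed_Int_compact) auto
  moreover have "continuous_on K \<phi>" using assms(2) continuous_on_subset K_def by blast
  ultimately obtain p where "p \<in> K" and p: "\<And>u. u \<in> K \<Longrightarrow> \<phi> p \<le> \<phi> u"
    using continuous_attains_inf[of K \<phi>] by blast
  have "\<phi> p \<le> \<phi> u" if "u \<in> D" for u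
  proof (cases "dist x u \<le> R")
    case True
    then show ?thesis using p that unfolding K_def by simp
  next
    case False
    then show ?thesis using p[OF \<open>x \<in> K\<close>] far[OF that] by simp
  qed
  with \<open>p \<in> K\<close> show ?thesis unfolding K_def by blast
qed

definition is_prox_point :: "'a::real_normed_vector set \<Rightarrow> ('a \<Rightarrow> real) \<Rightarrow> real \<Rightarrow> 'a \<Rightarrow> 'a \<Rightarrow> bool" where
  "is_prox_point D f \<alpha> x p \<longleftrightarrow> p \<in> D \<and>
     (\<forall>u\<in>D. f p + (norm (p - x))\<^sup>2 / (2 * \<alpha>) \<le> f u + (norm (u - x))\<^sup>2 / (2 * \<alpha>))"

lemma prox_point_exists:
  fixes f :: "'a::euclidean_space \<Rightarrow> real"
  assumes "closed D" "convex_on D f" "continuous_on D f" "x \<in> D" "0 < \<alpha>"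
  shows "\<exists>p. is_prox_point D f \<alpha> x p"
proof -
  have "compact (D \<inter> cball x 1)" using \<open>closed D\<close> by (intro closed_Int_compact) auto
  then have "bounded (f ` (D \<inter> cball x 1))"
    using assms(3) by (meson compact_continuous_image compact_imp_bounded continuous_on_subset inf_le1)
  then obtain B where "\<forall>w\<in>D \<inter> cball x 1. \<bar>f w\<bar> \<le> B"
    unfolding bounded_iff by auto
  then have B: "\<And>w. w \<in> D \<Longrightarrow> dist x w \<le> 1 \<Longrightarrow> \<bar>f w\<bar> \<le> B" by simp
  define \<phi> where "\<phi> u = f u + (norm (u - x))\<^sup>2 / (2 * \<alpha>)" for u
  \<comment> \<open>By convexity, f decreases at most linearly away from x, so the quadratic term wins.\<close>
  have "\<phi> x < \<phi> u" if "u \<in> D" "max 1 (4 * \<alpha> * B) < dist x u" for u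
  proof -
    define r where "r = dist x u"
    have r: "1 < r" "4 * \<alpha> * B < r" using that(2) r_def by auto
    have "f x - 2 * B * r \<le> f u"
      unfolding r_def using r r_def assms(2,4) that(1) B by (intro convex_on_linear_lower_bound) auto
    moreover have "2 * B < r / (2 * \<alpha>)" using r \<open>0 < \<alpha>\<close> by (simp add: field_simps)
    then have "2 * B * r < r / (2 * \<alpha>) * r" using r by (intro mult_strict_right_mono) auto
    moreover have "(norm (u - x))\<^sup>2 / (2 * \<alpha>) = r / (2 * \<alpha>) * r"
      unfolding r_def by (simp add: dist_norm norm_minus_commute power2_eq_square)
    ultimately show ?thesis unfolding \<phi>_def by (simp only: diff_self norm_zero) simp
  qed
  moreover have "continuous_on D \<phi>" unfolding \<phi>_def
    using \<open>0 < \<alpha>\<close> by (intro continuous_intros assms(3)) auto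
  ultimately obtain p where "p \<in> D" "\<forall>u\<in>D. \<phi> p \<le> \<phi> u"
    using continuous_attains_inf_coercive[OF \<open>closed D\<close> _ \<open>x \<in> D\<close>] by blast
  then show ?thesis unfolding is_prox_point_def \<phi>_def by blast
qed

lemma prox_point_three_point:
  fixes f :: "'a::real_inner \<Rightarrow> real"
  assumes f: "convex_on D f" and p: "is_prox_point D f \<alpha> x p" and "u \<in> D" "0 < \<alpha>"
  shows "f p + ((norm (p - x))\<^sup>2 + (norm (u - p))\<^sup>2) / (2 * \<alpha>) \<le> f u + (norm (u - x))\<^sup>2 / (2 * \<alpha>)"
proof -
  define a b where "a = p - x" and "b = u - p"
  have "p \<in> D" using p unfolding is_prox_point_def by blast
  \<comment> \<open>Compare p with the points of the segment from p to u, then let them tend to p.\<close>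
  have approx: "f p \<le> f u + (2 * (a \<bullet> b) + l * (norm b)\<^sup>2) / (2 * \<alpha>)" if l: "0 < l" "l \<le> 1" for l
  proof -
    define y where "y = (1 - l) *\<^sub>R p + l *\<^sub>R u"
    have "y \<in> D"
      unfolding y_def using convex_on_imp_convex[OF f] \<open>p \<in> D\<close> \<open>u \<in> D\<close> l by (intro convexD) auto
    then have "f p + (norm a)\<^sup>2 / (2 * \<alpha>) \<le> f y + (norm (y - x))\<^sup>2 / (2 * \<alpha>)"
      using p unfolding is_prox_point_def a_def by blast
    moreover have "f y \<le> (1 - l) * f p + l * f u"
      unfolding y_def using l \<open>p \<in> D\<close> \<open>u \<in> D\<close> by (intro convex_onD[OF f]) auto
    moreover have "y - x = a + l *\<^sub>R b" unfolding y_def a_def b_def by (simp add: algebra_simps)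
    moreover have "(norm (a + l *\<^sub>R b))\<^sup>2 = (norm a)\<^sup>2 + l * (2 * (a \<bullet> b) + l * (norm b)\<^sup>2)"
      by (simp add: power2_norm_eq_inner inner_add_left inner_add_right inner_commute algebra_simps)
    ultimately have "l * f p \<le> l * (f u + (2 * (a \<bullet> b) + l * (norm b)\<^sup>2) / (2 * \<alpha>))"
      by (simp add: add_divide_distrib algebra_simps)
    then show ?thesis using l by simp
  qed
  have "f p \<le> f u + 2 * (a \<bullet> b) / (2 * \<alpha>)"
  proof (rule field_le_epsilon)
    fix e :: real assume "0 < e"
    define l where "l = min 1 (2 * \<alpha> * e / ((norm b)\<^sup>2 + 1))"
    have l: "0 < l" "l \<le> 1" unfolding l_def using \<open>0 < e\<close> \<open>0 < \<alpha>\<close>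
      by (auto intro!: divide_pos_pos add_nonneg_pos)
    have "l \<le> 2 * \<alpha> * e / ((norm b)\<^sup>2 + 1)" unfolding l_def by simp
    then have "l * ((norm b)\<^sup>2 + 1) \<le> 2 * \<alpha> * e"
      by (simp add: pos_le_divide_eq add_nonneg_pos)
    then have "l * (norm b)\<^sup>2 \<le> 2 * \<alpha> * e" using l by (simp add: distrib_left)
    then have "l * (norm b)\<^sup>2 / (2 * \<alpha>) \<le> e" using \<open>0 < \<alpha>\<close> by (simp add: field_simps)
    then show "f p \<le> f u + 2 * (a \<bullet> b) / (2 * \<alpha>) + e"
      using approx[OF l] by (simp add: add_divide_distrib)
  qed
  moreover have "(norm (u - x))\<^sup>2 = (norm a)\<^sup>2 + 2 * (a \<bullet> b) + (norm b)\<^sup>2"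
    unfolding a_def b_def
    by (simp add: power2_norm_eq_inner inner_diff_left inner_diff_right inner_commute algebra_simps)
  ultimately show ?thesis unfolding a_def b_def by (simp add: add_divide_distrib)
qed

lemma prox_point_unique:
  fixes f :: "'a::real_inner \<Rightarrow> real"
  assumes "convex_on D f" "is_prox_point D f \<alpha> x p" "is_prox_point D f \<alpha> x q" "0 < \<alpha>"
  shows "p = q"
proof -
  have "q \<in> D" "p \<in> D" using assms(2,3) unfolding is_prox_point_def by blast+
  have "f q + (norm (q - x))\<^sup>2 / (2 * \<alpha>) \<le> f p + (norm (p - x))\<^sup>2 / (2 * \<alpha>)"
    using assms(3) \<open>p \<in> D\<close> unfolding is_prox_point_def by blast
  moreover have "f p + ((norm (p - x))\<^sup>2 + (norm (q - p))\<^sup>2) / (2 * \<alpha>) \<le> f q + (norm (q - x))\<^sup>2 / (2 * \<alpha>)"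
    using prox_point_three_point[OF assms(1,2) \<open>q \<in> D\<close> assms(4)] .
  ultimately have "(norm (q - p))\<^sup>2 / (2 * \<alpha>) \<le> 0" by (simp add: add_divide_distrib)
  then show ?thesis using \<open>0 < \<alpha>\<close> by (simp add: divide_le_0_iff)
qed

lemma prox_point_decrease:
  fixes f :: "'a::real_inner \<Rightarrow> real"
  assumes "convex_on D f" "is_prox_point D f \<alpha> x p" "x \<in> D" "0 < \<alpha>"
  shows "f p + (norm (p - x))\<^sup>2 / \<alpha> \<le> f x"
  using prox_point_three_point[OF assms] by (simp add: norm_minus_commute)

section \<open>Extended-real-valued convex functions\<close>

lemma edom_eq_ereal:
  assumes "ext_proper h" "u \<in> edom h"
  shows "h u = ereal (real_of_ereal (h u))"
  using assms unfolding ext_proper_def edom_def by (cases "h u") auto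

lemma convex_edom:
  assumes "ext_convex h"
  shows "convex (edom h)"
  unfolding convex_alt
proof (intro ballI allI impI)
  fix x y and l :: real
  assume x: "x \<in> edom h" and y: "y \<in> edom h" and l: "0 \<le> l \<and> l \<le> 1"
  show "(1 - l) *\<^sub>R x + l *\<^sub>R y \<in> edom h"
  proof (cases "l = 0 \<or> l = 1")
    case False
    then have "h ((1 - l) *\<^sub>R x + l *\<^sub>R y) \<le> ereal (1 - l) * h x + ereal l * h y"
      using assms[unfolded ext_convex_def, rule_format, of "1 - l" x y] l by simp
    also have "\<dots> < \<infinity>"
      using x y l False unfolding edom_def by (cases "h x"; cases "h y") auto
    finally show ?thesis unfolding edom_def by simp
  qed (use x y in auto)
qed

lemma convex_on_edom_real_of_ereal:
  assumes "ext_proper h" "ext_convex h"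
  shows "convex_on (edom h) (\<lambda>u. real_of_ereal (h u))"
proof (rule convex_onI)
  fix l :: real and x y assume l: "0 < l" "l < 1" and x: "x \<in> edom h" and y: "y \<in> edom h"
  have xy: "(1 - l) *\<^sub>R x + l *\<^sub>R y \<in> edom h"
    using convex_edom[OF assms(2)] x y l unfolding convex_alt by simp
  have "ereal (real_of_ereal (h ((1 - l) *\<^sub>R x + l *\<^sub>R y))) = h ((1 - l) *\<^sub>R x + l *\<^sub>R y)"
    using edom_eq_ereal[OF assms(1) xy] by simp
  also have "\<dots> \<le> ereal (1 - l) * h x + ereal l * h y"
    using assms(2)[unfolded ext_convex_def, rule_format, of "1 - l" x y] l by simp
  also have "\<dots> = ereal ((1 - l) * real_of_ereal (h x) + l * real_of_ereal (h y))"
    by (subst edom_eq_ereal[OF assms(1) x], subst edom_eq_ereal[OF assms(1) y]) simp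
  finally show "real_of_ereal (h ((1 - l) *\<^sub>R x + l *\<^sub>R y))
      \<le> (1 - l) * real_of_ereal (h x) + l * real_of_ereal (h y)" by simp
qed (rule convex_edom[OF assms(2)])

lemma continuous_on_edom_real_of_ereal:
  fixes h :: "'a::t2_space \<Rightarrow> ereal"
  assumes "ext_proper h" "continuous_on (edom h) h"
  shows "continuous_on (edom h) (\<lambda>u. real_of_ereal (h u))"
proof -
  have "\<bar>h u\<bar> \<noteq> \<infinity>" if "u \<in> edom h" for u
    by (subst edom_eq_ereal[OF assms(1) that]) simp
  then show ?thesis using assms(2) continuous_on_iff_real[of "edom h" h] by (simp add: comp_def)
qed

lemma domF_eq_INT_edom: "domF m G H = (\<Inter>j\<in>{1..m}. edom (H j))"
proof -
  have "ereal a + b < \<infinity> \<longleftrightarrow> b < \<infinity>" for a and b :: ereal by (cases b) auto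
  then show ?thesis unfolding domF_def Fval_def edom_def by auto
qed

section \<open>Step sizes of the MPG method\<close>

lemma backtrack_lower_bound:
  assumes "backtrack P \<tau>1 \<tau>2 t s" "0 < \<tau>1" "\<tau>2 \<le> 1" "0 < t"
    and "\<And>r. 0 < r \<Longrightarrow> r \<le> c \<Longrightarrow> P r"
  shows "min t (\<tau>1 * c) \<le> s \<and> s \<le> t"
  using assms
proof (induction rule: backtrack.induct)
  case (stop t)
  then show ?case by simp
next
  case (shrink t t' s)
  have "c < t" using shrink.hyps(1) shrink.prems(3,4) by force
  then have "\<tau>1 * c < \<tau>1 * t" "0 < \<tau>1 * t" using shrink.prems(1,3) by simp_all
  then have "\<tau>1 * c \<le> t'" "0 < t'" using shrink.hyps(2) by linarith+
  have "0 \<le> (1 - \<tau>2) * t" using shrink.prems(2,3) by simp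
  then have "t' \<le> t" using shrink.hyps(3) by (simp add: algebra_simps)
  have "min t' (\<tau>1 * c) \<le> s \<and> s \<le> t'"
    using shrink.IH[OF shrink.prems(1,2) \<open>0 < t'\<close> shrink.prems(4)] .
  then show ?case using \<open>\<tau>1 * c \<le> t'\<close> \<open>t' \<le> t\<close> by linarith
qed

lemma descent_test_if_small_step:
  assumes "\<And>y. (G j has_derivative (\<lambda>h. gradG j y \<bullet> h)) (at y)"
    and "\<And>y z. norm (gradG j y - gradG j z) \<le> L * norm (y - z)"
    and "0 \<le> r" "L * r \<le> \<gamma>"
  shows "descent_test G gradG \<gamma> j x d r"
proof -
  have "G j (x + r *\<^sub>R d) \<le> G j x + r * (gradG j x \<bullet> d) + L * r\<^sup>2 / 2 * (norm d)\<^sup>2"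
    using lipschitz_grad_upper_bound assms(1-3) by blast
  moreover have "L * r\<^sup>2 / 2 * (norm d)\<^sup>2 = r * ((L * r) / 2 * (norm d)\<^sup>2)"
    by (simp add: power2_eq_square)
  moreover have "\<dots> \<le> r * (\<gamma> / 2 * (norm d)\<^sup>2)"
    using assms(3,4) by (intro mult_left_mono mult_right_mono) auto
  ultimately show ?thesis unfolding descent_test_def by linarith
qed

lemma Max_image_pos:
  fixes L :: "'i \<Rightarrow> 'b::{linorder,zero}"
  assumes "finite A" "A \<noteq> {}" "\<And>j. j \<in> A \<Longrightarrow> 0 < L j"
  shows "0 < Max (L ` A)"
  using assms by (auto simp: Max_gr_iff)

lemma descent_tests_small_steps:
  fixes G :: "nat \<Rightarrow> 'a::real_inner \<Rightarrow> real" and L :: "nat \<Rightarrow> real"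
  assumes "1 \<le> m"
    and G_grad: "\<And>j y. j \<in> {1..m} \<Longrightarrow> (G j has_derivative (\<lambda>h. gradG j y \<bullet> h)) (at y)"
    and L_pos: "\<And>j. j \<in> {1..m} \<Longrightarrow> 0 < L j"
    and L_lip: "\<And>j y z. j \<in> {1..m} \<Longrightarrow> norm (gradG j y - gradG j z) \<le> L j * norm (y - z)"
    and r: "0 < r" "r \<le> \<gamma> / Max (L ` {1..m})"
  shows "\<forall>j\<in>{1..m}. descent_test G gradG \<gamma> j x d r"
proof
  fix j assume j: "j \<in> {1..m}"
  have Lmax_pos: "0 < Max (L ` {1..m})"
    using Max_image_pos[of "{1..m}", OF _ _ L_pos] assms(1) by simp
  show "descent_test G gradG \<gamma> j x d r"
  proof (rule descent_test_if_small_step[where G = G and gradG = gradG and j = j])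
    show "(G j has_derivative (\<lambda>h. gradG j y \<bullet> h)) (at y)" for y using G_grad[OF j] .
    show "norm (gradG j y - gradG j z) \<le> L j * norm (y - z)" for y z using L_lip[OF j] .
    have "L j * r \<le> Max (L ` {1..m}) * (\<gamma> / Max (L ` {1..m}))"
      using j L_pos[OF j] r Lmax_pos by (intro mult_mono) auto
    then show "L j * r \<le> \<gamma>" using Lmax_pos by simp
  qed (use r in simp)
qed

locale mpg_setting =
  fixes m :: nat and gradG :: "nat \<Rightarrow> 'a::euclidean_space \<Rightarrow> 'a" and H :: "nat \<Rightarrow> 'a \<Rightarrow> ereal"
  assumes m_pos: "1 \<le> m"
    and H_proper: "\<And>j. j \<in> {1..m} \<Longrightarrow> ext_proper (H j)"
    and H_convex: "\<And>j. j \<in> {1..m} \<Longrightarrow> ext_convex (H j)"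
    and H_cont: "\<And>j. j \<in> {1..m} \<Longrightarrow> continuous_on (edom (H j)) (H j)"
    and closed_dom: "closed (\<Inter>j\<in>{1..m}. edom (H j))"
begin

definition domH :: "'a set" where
  "domH = (\<Inter>j\<in>{1..m}. edom (H j))"

definition H_real :: "nat \<Rightarrow> 'a \<Rightarrow> real" where
  "H_real j u = real_of_ereal (H j u)"

definition psi_real :: "'a \<Rightarrow> 'a \<Rightarrow> real" where
  "psi_real x u = Max ((\<lambda>j. gradG j x \<bullet> (u - x) + H_real j u - H_real j x) ` {1..m})"

lemma closed_domH: "closed domH"
  using closed_dom unfolding domH_def .

lemma convex_domH: "convex domH"
  unfolding domH_def by (intro convex_INT convex_edom H_convex)

lemma H_eq_ereal: "u \<in> domH \<Longrightarrow> j \<in> {1..m} \<Longrightarrow> H j u = ereal (H_real j u)"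
  unfolding H_real_def domH_def by (intro edom_eq_ereal H_proper) auto

lemma convex_on_H_real: "j \<in> {1..m} \<Longrightarrow> convex_on domH (H_real j)"
  unfolding H_real_def[abs_def]
  by (rule convex_on_subset[OF convex_on_edom_real_of_ereal[OF H_proper H_convex] _ convex_domH])
    (auto simp: domH_def)

lemma continuous_on_H_real: "j \<in> {1..m} \<Longrightarrow> continuous_on domH (H_real j)"
  unfolding H_real_def[abs_def]
  by (rule continuous_on_subset[OF continuous_on_edom_real_of_ereal[OF H_proper H_cont]])
    (auto simp: domH_def)

lemma psi_real_ge: "j \<in> {1..m} \<Longrightarrow> gradG j x \<bullet> (u - x) + H_real j u - H_real j x \<le> psi_real x u"
  unfolding psi_real_def by (rule Max_ge) auto

lemma psi_real_self: "psi_real x x = 0"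
  unfolding psi_real_def using m_pos by simp

lemma convex_on_psi_real: "convex_on domH (psi_real x)"
  unfolding psi_real_def[abs_def]
proof (rule convex_on_Max)
  fix j assume j: "j \<in> {1..m}"
  have "convex_on domH (\<lambda>u. gradG j x \<bullet> (u - x) - H_real j x)"
    using convex_domH by (intro convex_onI) (auto simp: inner_diff_right inner_add_right algebra_simps)
  from convex_on_add[OF this convex_on_H_real[OF j]]
  show "convex_on domH (\<lambda>u. gradG j x \<bullet> (u - x) + H_real j u - H_real j x)"
    by (simp only: diff_add_eq)
qed (use m_pos in auto)

lemma continuous_on_psi_real: "continuous_on domH (psi_real x)"
  unfolding psi_real_def[abs_def]
  using m_pos by (intro continuous_on_Max continuous_intros continuous_on_H_real) auto

lemma psi_eq_psi_real:
  assumes "x \<in> domH" "u \<in> domH"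
  shows "psi m gradG H x u = ereal (psi_real x u)"
proof -
  have "(\<lambda>j. ereal (gradG j x \<bullet> (u - x)) + H j u - H j x) ` {1..m}
      = ereal ` (\<lambda>j. gradG j x \<bullet> (u - x) + H_real j u - H_real j x) ` {1..m}"
    unfolding image_image by (rule image_cong) (auto simp: H_eq_ereal assms)
  moreover have "ereal (psi_real x u) = Max (ereal ` (\<lambda>j. gradG j x \<bullet> (u - x) + H_real j u - H_real j x) ` {1..m})"
    unfolding psi_real_def using m_pos by (intro mono_Max_commute) (auto simp: mono_def)
  ultimately show ?thesis unfolding psi_def by simp
qed

lemma psi_outside_domH:
  assumes "x \<in> domH" "u \<notin> domH"
  shows "psi m gradG H x u = \<infinity>"
proof -
  obtain j where j: "j \<in> {1..m}" "H j u = \<infinity>" using assms(2) unfolding domH_def edom_def by auto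
  then have "ereal (gradG j x \<bullet> (u - x)) + H j u - H j x = \<infinity>"
    using H_eq_ereal[OF assms(1) j(1)] by simp
  then have "\<infinity> \<le> psi m gradG H x u"
    unfolding psi_def using j(1) by (metis (no_types, lifting) Max_ge finite_atLeastAtMost finite_imageI imageI)
  then show ?thesis by simp
qed

lemma prox_obj_eq:
  assumes "x \<in> domH"
  shows "prox_obj m gradG H \<alpha> x u =
    (if u \<in> domH then ereal (psi_real x u + (norm (u - x))\<^sup>2 / (2 * \<alpha>)) else \<infinity>)"
  unfolding prox_obj_def using psi_eq_psi_real[OF assms] psi_outside_domH[OF assms] by simp

lemma prox_obj_minimizer_iff:
  assumes "x \<in> domH"
  shows "(\<forall>v. prox_obj m gradG H \<alpha> x u \<le> prox_obj m gradG H \<alpha> x v)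
    \<longleftrightarrow> is_prox_point domH (psi_real x) \<alpha> x u"
proof
  assume min: "\<forall>v. prox_obj m gradG H \<alpha> x u \<le> prox_obj m gradG H \<alpha> x v"
  then have "u \<in> domH" using spec[OF min, of x] assms by (auto simp: prox_obj_eq split: if_splits)
  moreover have "psi_real x u + (norm (u - x))\<^sup>2 / (2 * \<alpha>) \<le> psi_real x v + (norm (v - x))\<^sup>2 / (2 * \<alpha>)"
    if "v \<in> domH" for v
    using min[rule_format, of v] \<open>u \<in> domH\<close> that by (simp add: prox_obj_eq[OF assms])
  ultimately show "is_prox_point domH (psi_real x) \<alpha> x u" unfolding is_prox_point_def by blast
qed (auto simp: is_prox_point_def prox_obj_eq[OF assms])

lemma p_alpha_is_prox_point:
  assumes "x \<in> domH" "0 < \<alpha>"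
  shows "is_prox_point domH (psi_real x) \<alpha> x (p_alpha m gradG H \<alpha> x)"
proof -
  have "\<exists>!p. is_prox_point domH (psi_real x) \<alpha> x p"
    using prox_point_exists[OF closed_domH convex_on_psi_real continuous_on_psi_real assms]
      prox_point_unique[OF convex_on_psi_real _ _ \<open>0 < \<alpha>\<close>] by blast
  then show ?thesis unfolding p_alpha_def prox_obj_minimizer_iff[OF assms(1)] by (rule theI')
qed

lemma psi_real_p_alpha_le:
  assumes "x \<in> domH" "0 < \<alpha>" "\<gamma> \<le> 2 / \<alpha>"
  shows "psi_real x (p_alpha m gradG H \<alpha> x) + \<gamma> / 2 * (norm (p_alpha m gradG H \<alpha> x - x))\<^sup>2 \<le> 0"
proof -
  let ?p = "p_alpha m gradG H \<alpha> x"
  have "psi_real x ?p + (norm (?p - x))\<^sup>2 / \<alpha> \<le> 0"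
    using prox_point_decrease[OF convex_on_psi_real p_alpha_is_prox_point[OF assms(1,2)] assms(1,2)]
    by (simp add: psi_real_self)
  moreover have "\<gamma> / 2 * (norm (?p - x))\<^sup>2 \<le> 1 / \<alpha> * (norm (?p - x))\<^sup>2"
    using assms(3) by (intro mult_right_mono) auto
  then have "\<gamma> / 2 * (norm (?p - x))\<^sup>2 \<le> (norm (?p - x))\<^sup>2 / \<alpha>" by simp
  ultimately show ?thesis by linarith
qed

lemma F_le_if_descent_tests:
  fixes G :: "nat \<Rightarrow> 'a \<Rightarrow> real" and x :: 'a and \<alpha> :: real
  defines "d \<equiv> p_alpha m gradG H \<alpha> x - x"
  assumes x: "x \<in> domH" and "0 < \<alpha>" "\<gamma> \<le> 2 / \<alpha>" and s: "0 \<le> s" "s \<le> 1"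
    and tests: "\<forall>j\<in>{1..m}. descent_test G gradG \<gamma> j x d s"
  shows "F_le m G H (x + s *\<^sub>R d) x"
  unfolding F_le_def
proof
  fix j assume j: "j \<in> {1..m}"
  let ?p = "p_alpha m gradG H \<alpha> x"
  have p: "?p \<in> domH" using p_alpha_is_prox_point[OF x \<open>0 < \<alpha>\<close>] unfolding is_prox_point_def by blast
  have y: "x + s *\<^sub>R d = (1 - s) *\<^sub>R x + s *\<^sub>R ?p" unfolding d_def by (simp add: algebra_simps)
  have "x + s *\<^sub>R d \<in> domH"
    unfolding y using convex_domH x p s by (intro convexD) auto
  have "H_real j (x + s *\<^sub>R d) \<le> (1 - s) * H_real j x + s * H_real j ?p"
    unfolding y using x p s by (intro convex_onD[OF convex_on_H_real[OF j]]) auto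
  moreover have "G j (x + s *\<^sub>R d) \<le> G j x + s * (gradG j x \<bullet> d) + s * (\<gamma> / 2) * (norm d)\<^sup>2"
    using tests j unfolding descent_test_def by blast
  moreover have "gradG j x \<bullet> d + H_real j ?p - H_real j x + \<gamma> / 2 * (norm d)\<^sup>2 \<le> 0"
    using psi_real_ge[OF j, of x ?p] psi_real_p_alpha_le[OF x assms(3,4)] unfolding d_def by linarith
  then have "s * (gradG j x \<bullet> d + H_real j ?p - H_real j x + \<gamma> / 2 * (norm d)\<^sup>2) \<le> 0"
    using s by (simp add: mult_nonneg_nonpos)
  ultimately have "G j (x + s *\<^sub>R d) + H_real j (x + s *\<^sub>R d) \<le> G j x + H_real j x"
    by (simp add: algebra_simps)
  then show "Fval G H j (x + s *\<^sub>R d) \<le> Fval G H j x"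
    unfolding Fval_def using H_eq_ereal[OF \<open>x + s *\<^sub>R d \<in> domH\<close> j] H_eq_ereal[OF x j] by simp
qed

lemma rejected_step_gt:
  fixes G :: "nat \<Rightarrow> 'a \<Rightarrow> real"
  assumes "x \<in> domH" "0 < \<alpha>" "\<gamma> \<le> 2 / \<alpha>" "0 < s" "s \<le> 1"
    and "\<And>r. 0 < r \<Longrightarrow> r \<le> c \<Longrightarrow> \<forall>j\<in>{1..m}. descent_test G gradG \<gamma> j x (p_alpha m gradG H \<alpha> x - x) r"
    and "\<not> F_le m G H (x + s *\<^sub>R (p_alpha m gradG H \<alpha> x - x)) x"
  shows "c < s"
  using F_le_if_descent_tests[OF assms(1-3)] assms(4-7) by (meson less_imp_le not_less)

lemma mpg_step3_step_size_bounds: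
  fixes G :: "nat \<Rightarrow> 'a \<Rightarrow> real" and L :: "nat \<Rightarrow> real"
  assumes x: "x \<in> domH" and "0 < \<alpha>" "0 < \<gamma>" "\<gamma> \<le> 2 / \<alpha>" "0 < \<tau>1" "\<tau>2 \<le> 1"
    and G_grad: "\<And>j y. j \<in> {1..m} \<Longrightarrow> (G j has_derivative (\<lambda>h. gradG j y \<bullet> h)) (at y)"
    and L_pos: "\<And>j. j \<in> {1..m} \<Longrightarrow> 0 < L j"
    and L_lip: "\<And>j y z. j \<in> {1..m} \<Longrightarrow> norm (gradG j y - gradG j z) \<le> L j * norm (y - z)"
    and step: "mpg_step3 m G gradG H \<alpha> \<gamma> \<tau>1 \<tau>2 x tk"
  shows "min 1 (\<tau>1 * \<gamma> / Max (L ` {1..m})) \<le> tk \<and> 0 < tk \<and> tk \<le> 1"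
proof -
  define d where "d = p_alpha m gradG H \<alpha> x - x"
  define c where "c = \<gamma> / Max (L ` {1..m})"
  have "0 < c" unfolding c_def using \<open>0 < \<gamma>\<close> Max_image_pos[of "{1..m}", OF _ _ L_pos] m_pos by simp
  have small: "\<forall>j\<in>{1..m}. descent_test G gradG \<gamma> j x d r" if "0 < r" "r \<le> c" for r
    using descent_tests_small_steps[OF m_pos G_grad L_pos L_lip that[unfolded c_def]] .
  obtain js s where js: "js \<in> {1..m}"
    and bt: "backtrack (descent_test G gradG \<gamma> js x d) \<tau>1 \<tau>2 1 s"
    and cases: "(F_le m G H (x + s *\<^sub>R d) x \<and> tk = s) \<or>
      (\<not> F_le m G H (x + s *\<^sub>R d) x \<and> (\<exists>t'. \<tau>1 * s \<le> t' \<and> t' \<le> \<tau>2 * s \<and>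
         backtrack (\<lambda>t. \<forall>j\<in>{1..m}. descent_test G gradG \<gamma> j x d t) \<tau>1 \<tau>2 t' tk))"
    using step unfolding mpg_step3_def Let_def d_def by blast
  have tmin_pos: "0 < min 1 (\<tau>1 * c)" using \<open>0 < \<tau>1\<close> \<open>0 < c\<close> by simp
  have s: "min 1 (\<tau>1 * c) \<le> s" "s \<le> 1"
    using backtrack_lower_bound[OF bt \<open>0 < \<tau>1\<close> \<open>\<tau>2 \<le> 1\<close>, of c] small js by auto
  have "min 1 (\<tau>1 * c) \<le> tk \<and> tk \<le> 1"
    using cases
  proof
    assume "F_le m G H (x + s *\<^sub>R d) x \<and> tk = s"
    then show ?thesis using s by simp
  next
    assume "\<not> F_le m G H (x + s *\<^sub>R d) x \<and> (\<exists>t'. \<tau>1 * s \<le> t' \<and> t' \<le> \<tau>2 * s \<and>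
         backtrack (\<lambda>t. \<forall>j\<in>{1..m}. descent_test G gradG \<gamma> j x d t) \<tau>1 \<tau>2 t' tk)"
    then obtain t' where no_decrease: "\<not> F_le m G H (x + s *\<^sub>R d) x"
      and t': "\<tau>1 * s \<le> t'" "t' \<le> \<tau>2 * s"
      and bt': "backtrack (\<lambda>t. \<forall>j\<in>{1..m}. descent_test G gradG \<gamma> j x d t) \<tau>1 \<tau>2 t' tk"
      by blast
    have "0 < s" using tmin_pos s(1) by linarith
    then have "c < s"
      using rejected_step_gt[OF x \<open>0 < \<alpha>\<close> \<open>\<gamma> \<le> 2 / \<alpha>\<close> _ s(2)] small no_decrease
      unfolding d_def by blast
    then have "0 < \<tau>1 * c" "\<tau>1 * c < \<tau>1 * s" using \<open>0 < \<tau>1\<close> \<open>0 < c\<close> by simp_all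
    then have "\<tau>1 * c \<le> t'" "0 < t'" using t'(1) by linarith+
    moreover have "\<tau>2 * s \<le> 1 * s" using \<open>\<tau>2 \<le> 1\<close> \<open>c < s\<close> \<open>0 < c\<close> by (intro mult_right_mono) auto
    then have "t' \<le> 1" using t'(2) s(2) by linarith
    ultimately show ?thesis
      using backtrack_lower_bound[OF bt' \<open>0 < \<tau>1\<close> \<open>\<tau>2 \<le> 1\<close> \<open>0 < t'\<close>, of c] small by auto
  qed
  moreover have "\<tau>1 * \<gamma> / Max (L ` {1..m}) = \<tau>1 * c" unfolding c_def by simp
  ultimately show ?thesis using tmin_pos by auto
qed

lemma mpg_step_in_domH:
  assumes "x \<in> domH" "0 < \<alpha>" "0 \<le> t" "t \<le> 1"
  shows "x + t *\<^sub>R (p_alpha m gradG H \<alpha> x - x) \<in> domH"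
proof -
  have "p_alpha m gradG H \<alpha> x \<in> domH"
    using p_alpha_is_prox_point[OF assms(1,2)] unfolding is_prox_point_def by blast
  moreover have "x + t *\<^sub>R (p_alpha m gradG H \<alpha> x - x) = (1 - t) *\<^sub>R x + t *\<^sub>R p_alpha m gradG H \<alpha> x"
    by (simp add: algebra_simps)
  ultimately show ?thesis using convex_domH assms by (simp add: convexD)
qed

end

theorem mainTheorem5:
  fixes m :: nat
    and G :: "nat \<Rightarrow> real^'n \<Rightarrow> real"
    and gradG :: "nat \<Rightarrow> real^'n \<Rightarrow> real^'n"
    and H :: "nat \<Rightarrow> real^'n \<Rightarrow> ereal"
    and L :: "nat \<Rightarrow> real"
    and \<alpha> \<gamma> \<tau>1 \<tau>2 :: real
    and x :: "nat \<Rightarrow> real^'n"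
    and t :: "nat \<Rightarrow> real"
  assumes m_pos: "1 \<le> m"
    and G_grad: "\<And>j y. j \<in> {1..m} \<Longrightarrow> (G j has_derivative (\<lambda>h. gradG j y \<bullet> h)) (at y)"
    and G_C1: "\<And>j. j \<in> {1..m} \<Longrightarrow> continuous_on UNIV (gradG j)"
    and G_convex: "\<And>j. j \<in> {1..m} \<Longrightarrow> convex_on UNIV (G j)"
    and H_proper: "\<And>j. j \<in> {1..m} \<Longrightarrow> ext_proper (H j)"
    and H_convex: "\<And>j. j \<in> {1..m} \<Longrightarrow> ext_convex (H j)"
    and H_cont: "\<And>j. j \<in> {1..m} \<Longrightarrow> continuous_on (edom (H j)) (H j)"
    and dom_ne: "domF m G H \<noteq> {}"
    and dom_closed: "closed (domF m G H)"
    and L_pos: "\<And>j. j \<in> {1..m} \<Longrightarrow> L j > 0"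
    and L_lip: "\<And>j y z. j \<in> {1..m} \<Longrightarrow> norm (gradG j y - gradG j z) \<le> L j * norm (y - z)"
    and x0: "x 0 \<in> domF m G H"
    and alpha_pos: "\<alpha> > 0"
    and gamma: "0 < \<gamma>" "\<gamma> < 2 / \<alpha>"
    and taus: "0 < \<tau>1" "\<tau>1 < \<tau>2" "\<tau>2 < 1"
    and run: "\<And>k. (\<forall>i\<le>k. theta_alpha m gradG H \<alpha> (x i) \<noteq> 0) \<Longrightarrow>
               mpg_step3 m G gradG H \<alpha> \<gamma> \<tau>1 \<tau>2 (x k) (t k) \<and>
               x (Suc k) = x k + t k *\<^sub>R (p_alpha m gradG H \<alpha> (x k) - x k)"
  shows "\<forall>k. (\<forall>i\<le>k. theta_alpha m gradG H \<alpha> (x i) \<noteq> 0) \<longrightarrow>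
           t k \<ge> min 1 (\<tau>1 * \<gamma> / Max (L ` {1..m}))"
proof -
  interpret mpg_setting m gradG H
    using m_pos H_proper H_convex H_cont dom_closed by unfold_locales (simp_all add: domF_eq_INT_edom)
  have domF_eq: "domF m G H = domH" unfolding domH_def by (rule domF_eq_INT_edom)
  have step: "min 1 (\<tau>1 * \<gamma> / Max (L ` {1..m})) \<le> t k \<and> 0 < t k \<and> t k \<le> 1"
    if "x k \<in> domH" "\<forall>i\<le>k. theta_alpha m gradG H \<alpha> (x i) \<noteq> 0" for k
    using run[OF that(2)] mpg_step3_step_size_bounds[OF that(1) alpha_pos gamma(1)
        less_imp_le[OF gamma(2)] taus(1) less_imp_le[OF taus(3)] G_grad L_pos L_lip]
    by blast
  have "(\<forall>i<k. theta_alpha m gradG H \<alpha> (x i) \<noteq> 0) \<longrightarrow> x k \<in> domH" for k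
  proof (induction k)
    case 0
    show ?case using x0 domF_eq by simp
  next
    case (Suc k)
    show ?case
    proof
      assume "\<forall>i<Suc k. theta_alpha m gradG H \<alpha> (x i) \<noteq> 0"
      then have xk: "x k \<in> domH" and running: "\<forall>i\<le>k. theta_alpha m gradG H \<alpha> (x i) \<noteq> 0"
        using Suc.IH by auto
      then show "x (Suc k) \<in> domH"
        using run[OF running] step[OF xk running] mpg_step_in_domH[OF xk alpha_pos] by simp
    qed
  qed
  then show ?thesis using step by auto
qed

end
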